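(* Let $\mathcal{O}=(O_1,\ldots,O_n)$ be a chain and $2\le i\le n$. Let $r_i,r_{i-1}$ be the radii and $o_i,o_{i-1}$ the centers of $O_i,O_{i-1}$. Then $H_i=||o_io_{i-1}||$ and $V_i\ge|r_i-r_{i-1}|$.
   Context: All objects lie in the Euclidean plane; a "circle" means a closed disk; $||pq||$ is Euclidean distance. Chain. A sequence of distinct finite closed disks $(O_1,\ldots,O_n)$ is a chain if: (1) every two consecutive disks $O_i,O_{i+1}$ intersect; let $a_i,b_i$ be the common points of their boundary circles ($a_i=b_i$ if tangent), labelled so that all the $a_i$ lie on one side of the chain and all the $b_i$ on the other. Let $C_i^{(i+1)}$ be the arc of the boundary of $O_i$ lying in $O_{i+1}$ and $C_{i+1}^{(i)}$ the arc of the boundary of $O_{i+1}$ lying in $O_i$. (2) For $2\le i\le n-1$, the arcs $C_i^{(i-1)}$ and $C_i^{(i+1)}$ share no point other than a boundary point. For $2\le i\le n$, choose coordinates in which $o_{i-1},o_i$ lie on a horizontal line and $a_{i-1}$ is on or above that line. Let $q_{i-1}^{\rightarrow}$ (resp. $q_i^{\leftarrow}$) be the point of the upper boundary of $O_{i-1}$ (resp. $O_i$) farthest from the line $o_{i-1}o_i$. Let $Q_{i-1}^{\rightarrow}$ be the upper arc of the boundary of $O_{i-1}$ between $q_{i-1}^{\rightarrow}$ and $a_{i-1}$, and $Q_i^{\leftarrow}$ the upper arc of the boundary of $O_i$ between $q_i^{\leftarrow}$ and $a_{i-1}$. $Q_{i-1}^{\rightarrow}$ is colored red if it lies inside $O_i$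 and green otherwise; $Q_i^{\leftarrow}$ is red if it lies inside $O_{i-1}$ and green otherwise. Let $\mathcal{P}_i$ be the path from $q_{i-1}^{\rightarrow}$ to $q_i^{\leftarrow}$ formed by $Q_{i-1}^{\rightarrow}$ and $Q_i^{\leftarrow}$. $H_i$ (resp. $V_i$) is the horizontal (resp. vertical) distance traveled along $\mathcal{P}_i$, green arcs contributing positively and red arcs negatively. *)

theory Defs
  imports "HOL-Analysis.Analysis"
begin

text \<open>Points of the plane are pairs of reals; fst = horizontal, snd = vertical coordinate.
  A closed disk is given by its center and (positive) radius; its boundary circle is sphere.\<close>

type_synonym pt = "real \<times> real"

definition cross2 :: "pt \<Rightarrow> pt \<Rightarrow> real" where
  "cross2 u v = fst u * snd v - snd u * fst v"

definition arc_in :: "(nat \<Rightarrow> pt) \<Rightarrow> (nat \<Rightarrow> real) \<Rightarrow> nat \<Rightarrow> nat \<Rightarrow> pt set" where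
  "arc_in c r j k = sphere (c j) (r j) \<inter> cball (c k) (r k)"

text \<open>Chain of disks O_1..O_n (centers c, radii r), with labelled common boundary points
  a_j, b_j of O_j and O_{j+1}; all a_j lie on one side of the chain (same side of the
  directed segments c_j -> c_{j+1}), all b_j on the other.\<close>
definition is_chain ::
  "nat \<Rightarrow> (nat \<Rightarrow> pt) \<Rightarrow> (nat \<Rightarrow> real) \<Rightarrow> (nat \<Rightarrow> pt) \<Rightarrow> (nat \<Rightarrow> pt) \<Rightarrow> bool" where
  "is_chain n c r a b \<longleftrightarrow>
     (\<forall>j\<in>{1..n}. 0 < r j) \<and>
     inj_on (\<lambda>j. (c j, r j)) {1..n} \<and>
     (\<forall>j\<in>{1..<n}. sphere (c j) (r j) \<inter> sphere (c (Suc j)) (r (Suc j)) = {a j, b j}) \<and>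
     (\<exists>\<sigma>\<in>{-1, 1::real}. \<forall>j\<in>{1..<n}.
         0 \<le> \<sigma> * cross2 (c (Suc j) - c j) (a j - c j) \<and>
         \<sigma> * cross2 (c (Suc j) - c j) (b j - c j) \<le> 0) \<and>
     (\<forall>j\<in>{2..<n}. arc_in c r j (j - 1) \<inter> arc_in c r j (Suc j)
                    \<subseteq> {a (j - 1), b (j - 1), a j, b j})"

definition top_pt :: "pt \<Rightarrow> real \<Rightarrow> pt" where
  "top_pt z \<rho> = (fst z, snd z + \<rho>)"

text \<open>Upper arc of the circle (center z, radius rho, z on the horizontal line) between
  the top point and the point p (p on the upper half of that circle).\<close>
definition upper_arc :: "pt \<Rightarrow> real \<Rightarrow> pt \<Rightarrow> pt set" where
  "upper_arc z \<rho> p = {w \<in> sphere z \<rho>. snd z \<le> snd w \<and>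
       min (fst p) (fst z) \<le> fst w \<and> fst w \<le> max (fst p) (fst z)}"

text \<open>Colour sign: red (-1) if the arc lies inside the disk D, green (+1) otherwise.\<close>
definition colour :: "pt set \<Rightarrow> pt set \<Rightarrow> real" where
  "colour A D = (if A \<subseteq> D then -1 else 1)"

text \<open>H_i and V_i computed in the coordinates given by the isometry T.  Along each
  arc (contained in an upper semicircle, between the top point and a_{i-1}) both coordinates
  are monotone, so horizontal/vertical distance travelled is the absolute coordinate change.\<close>
definition H_val :: "(pt \<Rightarrow> pt) \<Rightarrow> (nat \<Rightarrow> pt) \<Rightarrow> (nat \<Rightarrow> real) \<Rightarrow> (nat \<Rightarrow> pt) \<Rightarrow> nat \<Rightarrow> real" where
  "H_val T c r a i =
     (let z1 = T (c (i - 1)); z2 = T (c i); p = T (a (i - 1));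
          Q1 = upper_arc z1 (r (i - 1)) p; Q2 = upper_arc z2 (r i) p
      in colour Q1 (cball z2 (r i)) * \<bar>fst p - fst (top_pt z1 (r (i - 1)))\<bar>
       + colour Q2 (cball z1 (r (i - 1))) * \<bar>fst (top_pt z2 (r i)) - fst p\<bar>)"

definition V_val :: "(pt \<Rightarrow> pt) \<Rightarrow> (nat \<Rightarrow> pt) \<Rightarrow> (nat \<Rightarrow> real) \<Rightarrow> (nat \<Rightarrow> pt) \<Rightarrow> nat \<Rightarrow> real" where
  "V_val T c r a i =
     (let z1 = T (c (i - 1)); z2 = T (c i); p = T (a (i - 1));
          Q1 = upper_arc z1 (r (i - 1)) p; Q2 = upper_arc z2 (r i) p
      in colour Q1 (cball z2 (r i)) * \<bar>snd p - snd (top_pt z1 (r (i - 1)))\<bar>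
       + colour Q2 (cball z1 (r (i - 1))) * \<bar>snd (top_pt z2 (r i)) - snd p\<bar>)"

end

theory Submission
  imports Defs
begin

text \<open>Place the two centres on a horizontal line at abscissae x1 \<noteq> x2 and let p be the common
  boundary point above it.  For w on the first circle the power of w with respect to the second
  circle is |w - z2|^2 - r2^2 = 2 (x2 - x1)(px - wx), so the first arc, whose points lie
  horizontally between p and the top point, is red exactly when p does not lie strictly beyond
  x1 towards x2; symmetrically for the second arc.  The two sign conditions add up to
  (x2 - x1)^2 > 0, so at most one arc is red; the horizontal signed lengths then telescope to
  |x2 - x1|, and a red arc forces its own circle to be the smaller one, which gives the bound on
  the vertical signed length.\<close>

lemma dist_pt_sq:
  fixes u v :: pt
  shows "(dist u v)\<^sup>2 = (fst u - fst v)\<^sup>2 + (snd u - snd v)\<^sup>2"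
  by (cases u; cases v) (simp add: dist_Pair_Pair dist_real_def)

lemma between_sign_nonneg:
  fixes x1 x2 px wx :: real
  assumes side: "(px - x1) * (x2 - x1) \<le> 0"
    and between: "min px x1 \<le> wx" "wx \<le> max px x1"
  shows "0 \<le> (x2 - x1) * (wx - px)"
proof (cases "x1 < x2")
  case True
  then have "px \<le> x1"
    using side by (simp add: mult_le_0_iff)
  then show ?thesis
    using True between by simp
next
  case False
  then have "x2 = x1 \<or> x1 \<le> px"
    using side by (auto simp: mult_le_0_iff)
  then show ?thesis
    using False between by (auto simp: mult_nonpos_nonpos)
qed

lemma upper_arc_subset_cball:
  fixes z1 z2 p :: pt
  assumes level: "snd z1 = snd z2" and p1: "dist z1 p = r1" and p2: "dist z2 p = r2"
    and "0 \<le> r2" and side: "(fst p - fst z1) * (fst z2 - fst z1) \<le> 0"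
  shows "upper_arc z1 r1 p \<subseteq> cball z2 r2"
proof
  fix w assume "w \<in> upper_arc z1 r1 p"
  then have w1: "dist z1 w = r1"
    and between: "min (fst p) (fst z1) \<le> fst w" "fst w \<le> max (fst p) (fst z1)"
    by (auto simp: upper_arc_def)
  have between_sign: "0 \<le> (fst z2 - fst z1) * (fst w - fst p)"
    using side between by (rule between_sign_nonneg)
  have "(dist z2 w)\<^sup>2 = (fst z2 - fst w)\<^sup>2 + (snd z1 - snd w)\<^sup>2"
    using dist_pt_sq[of z2 w] level by simp
  also have "\<dots> = r2\<^sup>2 - 2 * ((fst z2 - fst z1) * (fst w - fst p))"
    using dist_pt_sq[of z1 w] dist_pt_sq[of z1 p] dist_pt_sq[of z2 p] w1 p1 p2 level
    by (simp add: power2_eq_square algebra_simps)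
  also have "\<dots> \<le> r2\<^sup>2"
    using between_sign by simp
  finally have "dist z2 w \<le> r2"
    using \<open>0 \<le> r2\<close> by (rule power2_le_imp_le)
  then show "w \<in> cball z2 r2"
    by simp
qed

lemma top_pt_in_upper_arc:
  assumes "0 \<le> \<rho>"
  shows "top_pt z \<rho> \<in> upper_arc z \<rho> p"
proof -
  have "dist z (top_pt z \<rho>) = \<rho>"
    using dist_pt_sq[of z "top_pt z \<rho>"] assms by (simp add: top_pt_def power2_eq_iff_nonneg)
  then show ?thesis
    using assms by (simp add: upper_arc_def top_pt_def)
qed

lemma top_pt_notin_cball:
  fixes z1 z2 p :: pt
  assumes level: "snd z1 = snd z2" and p1: "dist z1 p = r1" and p2: "dist z2 p = r2"
    and side: "0 < (fst p - fst z1) * (fst z2 - fst z1)"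
  shows "top_pt z1 r1 \<notin> cball z2 r2"
proof -
  have "(dist z2 (top_pt z1 r1))\<^sup>2 = (fst z2 - fst z1)\<^sup>2 + r1\<^sup>2"
    using dist_pt_sq[of z2 "top_pt z1 r1"] level by (simp add: top_pt_def)
  also have "\<dots> = r2\<^sup>2 + 2 * ((fst p - fst z1) * (fst z2 - fst z1))"
    using dist_pt_sq[of z1 p] dist_pt_sq[of z2 p] p1 p2 level
    by (simp add: power2_eq_square algebra_simps)
  finally have "r2\<^sup>2 < (dist z2 (top_pt z1 r1))\<^sup>2"
    using side by simp
  then show ?thesis
    using power_less_imp_less_base by fastforce
qed

lemma colour_upper_arc:
  fixes z1 z2 p :: pt
  assumes "snd z1 = snd z2" "dist z1 p = r1" "dist z2 p = r2" "0 \<le> r1" "0 \<le> r2"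
  shows "colour (upper_arc z1 r1 p) (cball z2 r2) =
           (if (fst p - fst z1) * (fst z2 - fst z1) \<le> 0 then -1 else 1)"
proof (cases "(fst p - fst z1) * (fst z2 - fst z1) \<le> 0")
  case True
  then show ?thesis
    using upper_arc_subset_cball[OF assms(1-3,5)] by (simp add: colour_def)
next
  case False
  then have "top_pt z1 r1 \<notin> cball z2 r2"
    by (intro top_pt_notin_cball[OF assms(1-3)]) simp
  then have "\<not> upper_arc z1 r1 p \<subseteq> cball z2 r2"
    using top_pt_in_upper_arc[OF assms(4)] by blast
  then show ?thesis
    using False by (simp add: colour_def)
qed

lemma not_both_red:
  fixes x1 x2 px :: real
  assumes "x1 \<noteq> x2"
  shows "\<not> ((px - x1) * (x2 - x1) \<le> 0 \<and> (px - x2) * (x1 - x2) \<le> 0)"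
proof -
  have "(px - x1) * (x2 - x1) + (px - x2) * (x1 - x2) = (x2 - x1)\<^sup>2"
    by (simp add: power2_eq_square algebra_simps)
  moreover have "0 < (x2 - x1)\<^sup>2"
    using assms by simp
  ultimately show ?thesis
    by linarith
qed

lemma signed_horizontal_sum:
  fixes x1 x2 px :: real
  assumes "x1 \<noteq> x2"
  shows "(if (px - x1) * (x2 - x1) \<le> 0 then -1 else 1) * \<bar>px - x1\<bar>
       + (if (px - x2) * (x1 - x2) \<le> 0 then -1 else 1) * \<bar>x2 - px\<bar> = \<bar>x2 - x1\<bar>"
  using assms by (cases "x1 < x2") (auto simp: mult_le_0_iff)

lemma red_arc_smaller_radius:
  fixes x1 x2 px y py r1 r2 :: real
  assumes "0 \<le> r2" and red: "(px - x1) * (x2 - x1) \<le> 0"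
    and p1: "r1\<^sup>2 = (x1 - px)\<^sup>2 + (y - py)\<^sup>2" and p2: "r2\<^sup>2 = (x2 - px)\<^sup>2 + (y - py)\<^sup>2"
  shows "r1 \<le> r2"
proof -
  have "r2\<^sup>2 - r1\<^sup>2 = (x2 - x1)\<^sup>2 - 2 * ((px - x1) * (x2 - x1))"
    using p1 p2 by (simp add: power2_eq_square algebra_simps)
  then have "r1\<^sup>2 \<le> r2\<^sup>2"
    using red zero_le_power2[of "x2 - x1"] by linarith
  then show ?thesis
    using \<open>0 \<le> r2\<close> by (rule power2_le_imp_le)
qed

lemma height_le_radius:
  fixes x px y py \<rho> :: real
  assumes "0 \<le> \<rho>" "\<rho>\<^sup>2 = (x - px)\<^sup>2 + (y - py)\<^sup>2"
  shows "py - y \<le> \<rho>"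
proof -
  have "(py - y)\<^sup>2 \<le> \<rho>\<^sup>2"
    using assms(2) by (simp add: power2_commute)
  then show ?thesis
    using assms(1) by (rule power2_le_imp_le)
qed

lemma signed_vertical_sum_ge:
  fixes x1 x2 px y py r1 r2 :: real
  assumes "x1 \<noteq> x2" "0 \<le> r1" "0 \<le> r2"
    and p1: "r1\<^sup>2 = (x1 - px)\<^sup>2 + (y - py)\<^sup>2" and p2: "r2\<^sup>2 = (x2 - px)\<^sup>2 + (y - py)\<^sup>2"
  shows "\<bar>r2 - r1\<bar> \<le> (if (px - x1) * (x2 - x1) \<le> 0 then -1 else 1) * \<bar>py - (y + r1)\<bar>
       + (if (px - x2) * (x1 - x2) \<le> 0 then -1 else 1) * \<bar>(y + r2) - py\<bar>"
proof -
  have h1: "py - y \<le> r1" and h2: "py - y \<le> r2"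
    using height_le_radius assms(2-5) by blast+
  consider "(px - x1) * (x2 - x1) \<le> 0" | "(px - x2) * (x1 - x2) \<le> 0"
    | "\<not> (px - x1) * (x2 - x1) \<le> 0" "\<not> (px - x2) * (x1 - x2) \<le> 0"
    by blast
  then show ?thesis
  proof cases
    case 1
    then have "r1 \<le> r2" "\<not> (px - x2) * (x1 - x2) \<le> 0"
      using red_arc_smaller_radius[OF assms(3) _ p1 p2] not_both_red[OF assms(1)] by auto
    then show ?thesis
      using 1 h1 h2 by simp
  next
    case 2
    then have "r2 \<le> r1" "\<not> (px - x1) * (x2 - x1) \<le> 0"
      using red_arc_smaller_radius[OF assms(2) _ p2 p1] not_both_red[OF assms(1)] by auto
    then show ?thesis
      using 2 h1 h2 by simp
  next
    case 3
    then show ?thesis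
      using h1 h2 by simp
  qed
qed

lemma dist_level:
  fixes z1 z2 :: pt
  assumes "snd z1 = snd z2"
  shows "dist z1 z2 = \<bar>fst z1 - fst z2\<bar>"
  using assms by (cases z1; cases z2) (simp add: dist_Pair_Pair dist_real_def)

lemma path_horizontal_eq:
  fixes z1 z2 p :: pt
  assumes level: "snd z1 = snd z2" and "dist z1 p = r1" "dist z2 p = r2"
    and "0 \<le> r1" "0 \<le> r2" and "z1 \<noteq> z2"
  shows "colour (upper_arc z1 r1 p) (cball z2 r2) * \<bar>fst p - fst (top_pt z1 r1)\<bar>
       + colour (upper_arc z2 r2 p) (cball z1 r1) * \<bar>fst (top_pt z2 r2) - fst p\<bar>
       = dist z1 z2"
proof -
  have "fst z1 \<noteq> fst z2"
    using \<open>z1 \<noteq> z2\<close> level prod_eq_iff by blast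
  then show ?thesis
    using signed_horizontal_sum[of "fst z1" "fst z2" "fst p"] dist_level[OF level]
      colour_upper_arc[OF assms(1-5)] colour_upper_arc[OF level[symmetric] assms(3,2,5,4)]
    by (simp add: top_pt_def abs_minus_commute)
qed

lemma path_vertical_ge:
  fixes z1 z2 p :: pt
  assumes level: "snd z1 = snd z2" and d1: "dist z1 p = r1" and d2: "dist z2 p = r2"
    and "0 \<le> r1" "0 \<le> r2" and "z1 \<noteq> z2"
  shows "\<bar>r2 - r1\<bar> \<le> colour (upper_arc z1 r1 p) (cball z2 r2) * \<bar>snd p - snd (top_pt z1 r1)\<bar>
       + colour (upper_arc z2 r2 p) (cball z1 r1) * \<bar>snd (top_pt z2 r2) - snd p\<bar>"
proof -
  have "fst z1 \<noteq> fst z2"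
    using \<open>z1 \<noteq> z2\<close> level prod_eq_iff by blast
  moreover have "r1\<^sup>2 = (fst z1 - fst p)\<^sup>2 + (snd z1 - snd p)\<^sup>2"
    and "r2\<^sup>2 = (fst z2 - fst p)\<^sup>2 + (snd z1 - snd p)\<^sup>2"
    using dist_pt_sq[of z1 p] dist_pt_sq[of z2 p] d1 d2 level by simp_all
  ultimately show ?thesis
    using signed_vertical_sum_ge[of "fst z1" "fst z2" r1 r2 "fst p" "snd z1" "snd p"] assms(4,5)
      colour_upper_arc[OF assms(1-5)] colour_upper_arc[OF level[symmetric] assms(3,2,5,4)]
    by (simp add: top_pt_def level)
qed

lemma chain_consecutive:
  assumes "is_chain n c r a b" "j \<in> {1..<n}"
  shows "dist (c j) (a j) = r j" "dist (c (Suc j)) (a j) = r (Suc j)"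
    and "0 < r j" "0 < r (Suc j)" "c j \<noteq> c (Suc j)"
proof -
  have js: "j \<in> {1..n}" "Suc j \<in> {1..n}"
    using assms(2) by auto
  have "a j \<in> sphere (c j) (r j) \<inter> sphere (c (Suc j)) (r (Suc j))"
    using assms unfolding is_chain_def by blast
  then show a1: "dist (c j) (a j) = r j" and a2: "dist (c (Suc j)) (a j) = r (Suc j)"
    by auto
  show "0 < r j" "0 < r (Suc j)"
    using assms(1) js unfolding is_chain_def by blast+
  show "c j \<noteq> c (Suc j)"
  proof
    assume "c j = c (Suc j)"
    with a1 a2 have "(c j, r j) = (c (Suc j), r (Suc j))"
      by simp
    then show False
      using assms(1) js unfolding is_chain_def by (auto dest: inj_onD)
  qed
qed

theorem fact2:
  fixes n i :: nat and c :: "nat \<Rightarrow> pt" and r :: "nat \<Rightarrow> real" and a b :: "nat \<Rightarrow> pt"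
    and T :: "pt \<Rightarrow> pt"
  assumes "is_chain n c r a b"
    and "2 \<le> i" and "i \<le> n"
    and "\<forall>x y. dist (T x) (T y) = dist x y"
    and "snd (T (c (i - 1))) = snd (T (c i))"
    and "snd (T (c (i - 1))) \<le> snd (T (a (i - 1)))"
  shows "H_val T c r a i = dist (c i) (c (i - 1))
         \<and> V_val T c r a i \<ge> \<bar>r i - r (i - 1)\<bar>"
proof -
  define j where "j = i - 1"
  have i: "i = Suc j" "j \<in> {1..<n}"
    using assms(2,3) by (auto simp: j_def)
  have isometry: "dist (T x) (T y) = dist x y" for x y
    using assms(4) by blast
  note chain = chain_consecutive[OF assms(1) i(2), folded i(1)]
  have level: "snd (T (c j)) = snd (T (c i))"
    using assms(5) by (simp add: j_def)
  have on_circles: "dist (T (c j)) (T (a j)) = r j" "dist (T (c i)) (T (a j)) = r i"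
    using chain by (simp_all add: isometry)
  have centres_ne: "T (c j) \<noteq> T (c i)"
    using chain(5) isometry[of "c j" "c i"] by (metis dist_eq_0_iff)
  show ?thesis
    unfolding H_val_def V_val_def Let_def j_def[symmetric]
    using path_horizontal_eq[OF level on_circles _ _ centres_ne]
      path_vertical_ge[OF level on_circles _ _ centres_ne] chain(3,4) isometry[of "c j" "c i"]
    by (simp add: dist_commute)
qed

end
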